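(* Let $K\subset\mathbb{R}^n$ be a closed convex set. For every $\varepsilon\ge0$, the map $\nu\mapsto w_\nu(\varepsilon)$ is concave on $K$.
   Context: $w_\nu(\varepsilon)=\mathbb{E}\sup_{t\in B(\nu,\varepsilon)\cap K}\langle x,t\rangle$ with $x\sim N(0,\mathbb{I}_n)$ and $B(\nu,\varepsilon)$ the closed Euclidean ball of radius $\varepsilon$ around $\nu$. *)

theory Defs
  imports "HOL-Probability.Probability"
begin

definition std_gaussian :: "'a::euclidean_space measure" where
  "std_gaussian = density lborel
     (\<lambda>x. ennreal ((2 * pi) powr (- real DIM('a) / 2) * exp (- (norm x)\<^sup>2 / 2)))"

definition local_gauss_width :: "'a::euclidean_space set \<Rightarrow> 'a \<Rightarrow> real \<Rightarrow> real" where
  "local_gauss_width K \<nu> \<epsilon> =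
     (\<integral>x. (SUP t \<in> cball \<nu> \<epsilon> \<inter> K. x \<bullet> t) \<partial>std_gaussian)"

end

theory Submission
  imports Defs
begin

(* For a fixed sample g, the support function \<nu> \<mapsto> sup {g \<bullet> t | t \<in> B(\<nu>,\<epsilon>) \<inter> K} is
   concave on K: if t\<^sub>1, t\<^sub>2 attain the suprema at \<nu>\<^sub>1, \<nu>\<^sub>2, then u t\<^sub>1 + v t\<^sub>2 lies in K
   and within \<epsilon> of u \<nu>\<^sub>1 + v \<nu>\<^sub>2. Integrating in g preserves concavity. Integrability holds
   because the support function of a bounded set grows at most linearly in g, and the Gaussian
   has a finite first moment: its density times the norm is dominated by a product of
   integrable one-dimensional functions. *)

lemma exp_neg_norm_sq_half_eq_prod:
  fixes x :: "'a::euclidean_space"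
  shows "exp (- (norm x)\<^sup>2 / 2) = (\<Prod>b\<in>Basis. exp (- (x \<bullet> b)\<^sup>2 / 2))"
proof -
  have "(norm x)\<^sup>2 = (\<Sum>b\<in>Basis. (x \<bullet> b)\<^sup>2)"
    unfolding power2_norm_eq_inner euclidean_inner[of x x] by (simp add: power2_eq_square)
  then show ?thesis
    by (simp add: exp_sum[symmetric] sum_negf sum_divide_distrib)
qed

lemma norm_le_prod_one_plus_abs_inner:
  fixes x :: "'a::euclidean_space"
  shows "norm x \<le> (\<Prod>b\<in>Basis. 1 + \<bar>x \<bullet> b\<bar>)"
  using norm_le_l1[of x] sum_le_prod[of Basis "\<lambda>b. \<bar>x \<bullet> b\<bar>"] by simp

lemma exp_neg_norm_sq_half_mult_norm_le_prod:
  fixes x :: "'a::euclidean_space"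
  shows "exp (- (norm x)\<^sup>2 / 2) * norm x
    \<le> (\<Prod>b\<in>Basis. (1 + \<bar>x \<bullet> b\<bar>) * exp (- (x \<bullet> b)\<^sup>2 / 2))"
proof -
  have "exp (- (norm x)\<^sup>2 / 2) * norm x
      \<le> (\<Prod>b\<in>Basis. exp (- (x \<bullet> b)\<^sup>2 / 2)) * (\<Prod>b\<in>Basis. 1 + \<bar>x \<bullet> b\<bar>)"
    unfolding exp_neg_norm_sq_half_eq_prod
    by (intro mult_left_mono norm_le_prod_one_plus_abs_inner prod_nonneg) auto
  also have "\<dots> = (\<Prod>b\<in>Basis. (1 + \<bar>x \<bullet> b\<bar>) * exp (- (x \<bullet> b)\<^sup>2 / 2))"
    by (simp add: prod.distrib mult.commute)
  finally show ?thesis .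
qed

lemma integrable_one_plus_abs_mult_gaussian:
  "integrable lborel (\<lambda>t::real. (1 + \<bar>t\<bar>) * exp (- t\<^sup>2 / 2))"
proof -
  have "integrable lborel (\<lambda>t. sqrt (2 * pi) *
      (std_normal_density t * \<bar>t\<bar> ^ 0 + std_normal_density t * \<bar>t\<bar> ^ 1))"
    by (intro integrable_mult_right Bochner_Integration.integrable_add
        integrable_std_normal_moment_abs)
  then show ?thesis
    by (simp add: std_normal_density_def algebra_simps)
qed

lemma integrable_std_gaussian_norm:
  "integrable (std_gaussian :: 'a::euclidean_space measure) norm"
proof -
  define c :: real where "c = (2 * pi) powr (- real DIM('a) / 2)"
  define \<phi> :: "real \<Rightarrow> real" where "\<phi> t = (1 + \<bar>t\<bar>) * exp (- t\<^sup>2 / 2)" for t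
  have c_nonneg: "0 \<le> c" and \<phi>_nonneg: "\<And>t. 0 \<le> \<phi> t"
    by (simp_all add: c_def \<phi>_def)
  have [measurable]: "\<phi> \<in> borel_measurable borel"
    unfolding \<phi>_def by measurable
  have density_bound: "c * exp (- (norm x)\<^sup>2 / 2) * norm x \<le> c * (\<Prod>b\<in>Basis. \<phi> (x \<bullet> b))"
    for x :: 'a
    using mult_left_mono[OF exp_neg_norm_sq_half_mult_norm_le_prod c_nonneg]
    by (simp add: \<phi>_def mult.assoc)
  have "(\<integral>\<^sup>+x. ennreal (c * exp (- (norm x)\<^sup>2 / 2) * norm (x::'a)) \<partial>lborel)
      \<le> (\<integral>\<^sup>+x. ennreal c * (\<Prod>b\<in>Basis. ennreal (\<phi> ((x::'a) \<bullet> b))) \<partial>lborel)"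
    using density_bound c_nonneg \<phi>_nonneg
    by (intro nn_integral_mono) (simp add: prod_ennreal ennreal_mult[symmetric] prod_nonneg)
  also have "\<dots> = ennreal c * (\<Prod>b\<in>(Basis::'a set). \<integral>\<^sup>+t. ennreal (\<phi> t) \<partial>lborel)"
    using nn_integral_lborel_prod[where f="\<lambda>_ t. ennreal (\<phi> t)" and 'a='a]
    by (subst nn_integral_cmult) auto
  also have "\<dots> < \<infinity>"
    using nn_integral_eq_integral[OF integrable_one_plus_abs_mult_gaussian] \<phi>_nonneg
    by (simp add: \<phi>_def ennreal_mult_less_top power_less_top_ennreal less_top)
  finally have "integrable lborel (\<lambda>x::'a. (c * exp (- (norm x)\<^sup>2 / 2)) *\<^sub>R norm x)"
    using c_nonneg by (intro integrableI_bounded) simp_all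
  then show ?thesis
    unfolding std_gaussian_def c_def[symmetric]
    by (subst integrable_density) (auto simp: c_nonneg)
qed

definition support_fun :: "'a::real_inner set \<Rightarrow> 'a \<Rightarrow> real" where
  "support_fun S x = (SUP t\<in>S. x \<bullet> t)"

lemma bdd_above_inner_image:
  fixes S :: "'a::real_inner set"
  assumes "bounded S"
  shows "bdd_above ((\<lambda>t. x \<bullet> t) ` S)"
  by (intro bounded_imp_bdd_above bounded_linear_image bounded_linear_inner_right assms)

lemma support_fun_upper:
  fixes S :: "'a::real_inner set"
  assumes "bounded S" "t \<in> S"
  shows "x \<bullet> t \<le> support_fun S x"
  unfolding support_fun_def by (intro cSUP_upper bdd_above_inner_image assms)

lemma support_fun_attained:
  fixes S :: "'a::real_inner set"
  assumes "compact S" "S \<noteq> {}"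
  obtains t where "t \<in> S" "support_fun S x = x \<bullet> t"
proof -
  have "continuous_on S (\<lambda>t. x \<bullet> t)"
    by (intro continuous_intros)
  then obtain t where t: "t \<in> S" "\<forall>s\<in>S. x \<bullet> s \<le> x \<bullet> t"
    using continuous_attains_sup[OF assms] by blast
  then have "support_fun S x = x \<bullet> t"
    unfolding support_fun_def by (intro cSup_eq_maximum) auto
  with t(1) show ?thesis by (rule that)
qed

lemma support_fun_le_add_norm_diff:
  fixes S :: "'a::real_inner set"
  assumes "S \<noteq> {}" "S \<subseteq> cball 0 R"
  shows "support_fun S x \<le> support_fun S y + R * norm (x - y)"
  unfolding support_fun_def[of S x]
proof (rule cSUP_least[OF assms(1)])
  fix t assume t: "t \<in> S"
  have "bounded S"
    using assms(2) bounded_cball bounded_subset by blast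
  have "x \<bullet> t = y \<bullet> t + (x - y) \<bullet> t"
    by (simp add: inner_diff_left)
  also have "\<dots> \<le> support_fun S y + norm (x - y) * norm t"
    by (intro add_mono support_fun_upper norm_cauchy_schwarz \<open>bounded S\<close> t)
  also have "\<dots> \<le> support_fun S y + norm (x - y) * R"
    using t assms(2) by (intro add_left_mono mult_left_mono) auto
  finally show "x \<bullet> t \<le> support_fun S y + R * norm (x - y)"
    by (simp add: mult.commute)
qed

lemma lipschitz_on_support_fun:
  fixes S :: "'a::real_inner set"
  assumes "S \<noteq> {}" "S \<subseteq> cball 0 R"
  shows "R-lipschitz_on UNIV (support_fun S)"
proof (rule lipschitz_onI)
  fix x y :: 'a
  show "dist (support_fun S x) (support_fun S y) \<le> R * dist x y"
    using support_fun_le_add_norm_diff[OF assms, of x y] support_fun_le_add_norm_diff[OF assms, of y x]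
    by (simp add: dist_real_def dist_norm norm_minus_commute abs_le_iff)
next
  show "0 \<le> R"
    using assms by auto
qed

lemma abs_support_fun_le:
  fixes S :: "'a::real_inner set"
  assumes "S \<noteq> {}" "S \<subseteq> cball 0 R"
  shows "\<bar>support_fun S x\<bar> \<le> R * norm x"
proof -
  have "support_fun S 0 = 0"
    using assms(1) by (simp add: support_fun_def)
  then show ?thesis
    using lipschitz_onD[OF lipschitz_on_support_fun[OF assms], of x 0] by (simp add: dist_real_def)
qed

lemma integrable_support_fun:
  fixes S :: "'a::real_inner set" and M :: "'a measure"
  assumes "sets M = sets borel" "integrable M norm" "S \<noteq> {}" "S \<subseteq> cball 0 R"
  shows "integrable M (support_fun S)"
proof (rule Bochner_Integration.integrable_bound)
  show "integrable M (\<lambda>x. R * norm x)"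
    using assms(2) by (rule integrable_mult_right)
  show "support_fun S \<in> borel_measurable M"
    unfolding measurable_cong_sets[OF assms(1) refl]
    by (intro borel_measurable_continuous_onI
        lipschitz_on_continuous_on[OF lipschitz_on_support_fun[OF assms(3,4)]])
  have "0 \<le> R"
    using assms(3,4) by auto
  then show "AE x in M. norm (support_fun S x) \<le> norm (R * norm x)"
    using abs_support_fun_le[OF assms(3,4)] by simp
qed

lemma support_fun_convex_combination_le:
  fixes A B C :: "'a::real_inner set"
  assumes "compact A" "A \<noteq> {}" "compact B" "B \<noteq> {}" "bounded C"
    and "\<And>a b. a \<in> A \<Longrightarrow> b \<in> B \<Longrightarrow> u *\<^sub>R a + v *\<^sub>R b \<in> C"
  shows "u * support_fun A x + v * support_fun B x \<le> support_fun C x"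
proof -
  obtain a where a: "a \<in> A" "support_fun A x = x \<bullet> a"
    using support_fun_attained[OF assms(1,2)] .
  obtain b where b: "b \<in> B" "support_fun B x = x \<bullet> b"
    using support_fun_attained[OF assms(3,4)] .
  have "x \<bullet> (u *\<^sub>R a + v *\<^sub>R b) \<le> support_fun C x"
    using assms(5) assms(6)[OF a(1) b(1)] by (rule support_fun_upper)
  with a(2) b(2) show ?thesis
    by (simp add: inner_add_right)
qed

lemma convex_combination_mem_cball_Int:
  fixes K :: "'a::real_normed_vector set"
  assumes "convex K" "a \<in> cball x \<epsilon> \<inter> K" "b \<in> cball y \<epsilon> \<inter> K"
    and "u \<ge> 0" "v \<ge> 0" "u + v = 1"
  shows "u *\<^sub>R a + v *\<^sub>R b \<in> cball (u *\<^sub>R x + v *\<^sub>R y) \<epsilon> \<inter> K"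
proof
  show "u *\<^sub>R a + v *\<^sub>R b \<in> K"
    using assms by (auto intro: convexD)
  have "dist (u *\<^sub>R x + v *\<^sub>R y) (u *\<^sub>R a + v *\<^sub>R b) = norm (u *\<^sub>R (x - a) + v *\<^sub>R (y - b))"
    by (simp add: dist_norm algebra_simps)
  also have "\<dots> \<le> u * norm (x - a) + v * norm (y - b)"
    using norm_triangle_ineq[of "u *\<^sub>R (x - a)" "v *\<^sub>R (y - b)"] assms(4,5) by simp
  also have "\<dots> \<le> u * \<epsilon> + v * \<epsilon>"
    using assms(2-5) by (intro add_mono mult_left_mono) (auto simp: dist_norm)
  also have "\<dots> = \<epsilon>"
    using assms(6) by (metis distrib_right mult_1)
  finally show "u *\<^sub>R a + v *\<^sub>R b \<in> cball (u *\<^sub>R x + v *\<^sub>R y) \<epsilon>"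
    by simp
qed

lemma concave_on_support_fun_cball_Int:
  fixes K :: "'a::euclidean_space set"
  assumes "closed K" "convex K" "\<epsilon> \<ge> 0"
  shows "concave_on K (\<lambda>\<nu>. support_fun (cball \<nu> \<epsilon> \<inter> K) g)"
  unfolding concave_on_iff
proof (intro conjI ballI allI impI assms(2))
  fix x y :: 'a and u v :: real
  assume "x \<in> K" "y \<in> K" "0 \<le> u" "0 \<le> v" "u + v = 1"
  have compact: "compact (cball \<nu> \<epsilon> \<inter> K)" for \<nu>
    using assms(1) by (intro compact_Int_closed compact_cball)
  have "cball x \<epsilon> \<inter> K \<noteq> {}" "cball y \<epsilon> \<inter> K \<noteq> {}"
    using \<open>x \<in> K\<close> \<open>y \<in> K\<close> assms(3) by (metis IntI centre_in_cball empty_iff)+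
  with \<open>0 \<le> u\<close> \<open>0 \<le> v\<close> \<open>u + v = 1\<close> show
    "u * support_fun (cball x \<epsilon> \<inter> K) g + v * support_fun (cball y \<epsilon> \<inter> K) g
      \<le> support_fun (cball (u *\<^sub>R x + v *\<^sub>R y) \<epsilon> \<inter> K) g"
    by (intro support_fun_convex_combination_le compact compact_imp_bounded
        convex_combination_mem_cball_Int assms(2))
qed

lemma concave_on_integral:
  fixes f :: "'a::real_vector \<Rightarrow> 'b \<Rightarrow> real"
  assumes "convex K" "\<And>\<nu>. \<nu> \<in> K \<Longrightarrow> integrable M (f \<nu>)"
    and "\<And>g. concave_on K (\<lambda>\<nu>. f \<nu> g)"
  shows "concave_on K (\<lambda>\<nu>. \<integral>g. f \<nu> g \<partial>M)"
  unfolding concave_on_iff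
proof (intro conjI ballI allI impI assms(1))
  fix x y :: 'a and u v :: real
  assume "x \<in> K" "y \<in> K" "0 \<le> u" "0 \<le> v" "u + v = 1"
  moreover have "u *\<^sub>R x + v *\<^sub>R y \<in> K"
    using calculation assms(1) by (auto intro: convexD)
  ultimately have "(\<integral>g. u * f x g + v * f y g \<partial>M) \<le> (\<integral>g. f (u *\<^sub>R x + v *\<^sub>R y) g \<partial>M)"
    using assms(2,3) by (intro integral_mono) (auto simp: concave_on_iff)
  then show "u * (\<integral>g. f x g \<partial>M) + v * (\<integral>g. f y g \<partial>M) \<le> (\<integral>g. f (u *\<^sub>R x + v *\<^sub>R y) g \<partial>M)"
    using assms(2) \<open>x \<in> K\<close> \<open>y \<in> K\<close> by simp
qed

theorem mainTheorem11:
  fixes K :: "'a::euclidean_space set" and \<epsilon> :: real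
  assumes "closed K" and "convex K" and "\<epsilon> \<ge> 0"
  shows "concave_on K (\<lambda>\<nu>. local_gauss_width K \<nu> \<epsilon>)"
proof -
  have "concave_on K (\<lambda>\<nu>. \<integral>g. support_fun (cball \<nu> \<epsilon> \<inter> K) g \<partial>std_gaussian)"
  proof (rule concave_on_integral[OF assms(2) _ concave_on_support_fun_cball_Int[OF assms]])
    fix \<nu> :: 'a
    assume "\<nu> \<in> K"
    then have "cball \<nu> \<epsilon> \<inter> K \<noteq> {}"
      using assms(3) by (metis IntI centre_in_cball empty_iff)
    moreover have "cball \<nu> \<epsilon> \<subseteq> cball 0 (norm \<nu> + \<epsilon>)"
      by (simp add: cball_subset_cball_iff)
    ultimately show "integrable std_gaussian (support_fun (cball \<nu> \<epsilon> \<inter> K))"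
      by (intro integrable_support_fun integrable_std_gaussian_norm) (auto simp: std_gaussian_def)
  qed
  then show ?thesis
    by (simp add: local_gauss_width_def support_fun_def)
qed

end
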